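(* Let $n\in\mathbb N$, let $H_1,\dots,H_n$ be BF-monoids, and let $H=H_1\times\dots\times H_n$. Then (1) $\mathcal R(H)=\bigcup_{i=1}^n\mathcal R(H_i)$; (2) $\operatorname{Ca}(H)=\bigcup_{i=1}^n\operatorname{Ca}(H_i)$; (3) $\daleth^*(H)=\bigcup_{i=1}^n\daleth^*(H_i)$.
   Context: A monoid is a commutative cancellative semigroup with identity; $H_{\mathrm{red}}=H/H^\times$, $\mathcal A(H)$ its atoms. For $a\in H$, $\mathsf Z(a)$ is the set of factorizations of $a$ (elements of the free abelian monoid on $\mathcal A(H_{\mathrm{red}})$ multiplying to $aH^\times$), $|z|$ the number of atoms in $z$, $\mathsf L(a)=\{|z|:z\in\mathsf Z(a)\}$. $H$ is a BF-monoid if $\mathsf L(a)$ is finite and nonempty for all $a\in H$. $\daleth^*(H) = \{\min(\mathsf L(uv)\setminus\{2\}) : u,v \in \mathcal A(H),\ |\mathsf L(uv)|>1\}$. Distance: writing $z = u_1\cdots u_k v_1\cdots v_\ell$, $z'=u_1\cdots u_k w_1\cdots w_m$ with no $v_i$ equal to any $w_j$, $\mathsf d(z,z')=\max\{\ell,m\}$. An $N$-chain from $z$ to $z'$ in $\mathsf Z(a)$ is a sequence $z=z_0,\dots,z_n=z'$ in $\mathsf Z(a)$ with $\mathsf d(z_{i-1},z_i)\le N$. $\mathsf c(a)$ is the least $N$ such that any two factorizations of $a$ are connected by an $N$-chain; $\operatorname{Ca}(H)=\{\mathsf c(a): a\in H,\ |\mathsf Z(a)|>1\}$. $\mathcal R(H)$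 is the set of $d\in\mathbb N_{\ge2}$ such that some $a\in H$ has distinct $z,z'\in\mathsf Z(a)$ with $\mathsf d(z,z')=d$ not connected by any $(d-1)$-chain. *)

theory Defs
  imports "HOL-Algebra.Divisibility" "HOL-Library.FuncSet" "HOL-Library.Multiset"
begin

text \<open>Monoids in the sense of the paper: commutative cancellative monoids,
  i.e. HOL-Algebra's comm_monoid_cancel.  Atoms are the irreducible
  (non-unit) elements of the carrier.\<close>

definition atoms :: "('a, 'b) monoid_scheme \<Rightarrow> 'a set" where
  "atoms G = {u \<in> carrier G. irreducible G u}"

text \<open>Factorizations of a: elements of the free abelian monoid over the atoms
  of H_red, represented as multisets of associate classes of atoms
  whose product is associated to a.\<close>

definition Zs :: "('a, 'b) monoid_scheme \<Rightarrow> 'a \<Rightarrow> 'a set multiset set" where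
  "Zs G a = fmset G ` {as. set as \<subseteq> carrier G \<and> wfactors G as a}"

definition Ls :: "('a, 'b) monoid_scheme \<Rightarrow> 'a \<Rightarrow> nat set" where
  "Ls G a = size ` Zs G a"

definition BF_monoid :: "('a, 'b) monoid_scheme \<Rightarrow> bool" where
  "BF_monoid G \<longleftrightarrow> comm_monoid_cancel G \<and>
     (\<forall>a \<in> carrier G. finite (Ls G a) \<and> Ls G a \<noteq> {})"

definition fdist :: "'c multiset \<Rightarrow> 'c multiset \<Rightarrow> nat" where
  "fdist z z' = max (size (z - z')) (size (z' - z))"

definition is_chain :: "'c multiset set \<Rightarrow> nat \<Rightarrow> 'c multiset \<Rightarrow> 'c multiset \<Rightarrow> bool" where
  "is_chain Z N z z' \<longleftrightarrow> (\<exists>zs. zs \<noteq> [] \<and> hd zs = z \<and> last zs = z' \<and> set zs \<subseteq> Z \<and>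
      (\<forall>i. Suc i < length zs \<longrightarrow> fdist (zs ! i) (zs ! Suc i) \<le> N))"

definition catenary_degree :: "('a, 'b) monoid_scheme \<Rightarrow> 'a \<Rightarrow> nat" where
  "catenary_degree G a =
     (LEAST N. \<forall>z \<in> Zs G a. \<forall>z' \<in> Zs G a. is_chain (Zs G a) N z z')"

definition Ca :: "('a, 'b) monoid_scheme \<Rightarrow> nat set" where
  "Ca G = {catenary_degree G a | a. a \<in> carrier G \<and>
            (\<exists>z \<in> Zs G a. \<exists>z' \<in> Zs G a. z \<noteq> z')}"

definition Rset :: "('a, 'b) monoid_scheme \<Rightarrow> nat set" where
  "Rset G = {d. 2 \<le> d \<and> (\<exists>a \<in> carrier G. \<exists>z \<in> Zs G a. \<exists>z' \<in> Zs G a.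
              z \<noteq> z' \<and> fdist z z' = d \<and> \<not> is_chain (Zs G a) (d - 1) z z')}"

definition daleth_star :: "('a, 'b) monoid_scheme \<Rightarrow> nat set" where
  "daleth_star G = {Min (Ls G (u \<otimes>\<^bsub>G\<^esub> v) - {2}) | u v.
      u \<in> atoms G \<and> v \<in> atoms G \<and> card (Ls G (u \<otimes>\<^bsub>G\<^esub> v)) > 1}"

text \<open>Direct product H_0 x ... x H_(n-1) of a family of monoids
  (componentwise operation on functions with support {..<n}).\<close>
definition prodM :: "nat \<Rightarrow> (nat \<Rightarrow> ('a, 'b) monoid_scheme) \<Rightarrow> (nat \<Rightarrow> 'a) monoid" where
  "prodM n H = \<lparr> carrier = (\<Pi>\<^sub>E i\<in>{..<n}. carrier (H i)),
                 mult = (\<lambda>f g. \<lambda>i\<in>{..<n}. f i \<otimes>\<^bsub>H i\<^esub> g i),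
                 one = (\<lambda>i\<in>{..<n}. \<one>\<^bsub>H i\<^esub>) \<rparr>"

end

theory Submission
  imports Defs
begin

text \<open>An atom of \<open>H = H\<^sub>1 \<times> \<dots> \<times> H\<^sub>n\<close> is a unit in all coordinates but one, where it is an
  atom. Hence the factorizations of \<open>a\<close> correspond bijectively to tuples of factorizations of the
  coordinates \<open>a\<^sub>i\<close>, and the distance of two factorizations is the larger of the two sums over
  the coordinates of the one-sided differences. An element that is a unit outside one coordinate
  therefore has its factorizations isometric to those of that coordinate, which gives the
  inclusions \<open>\<supseteq>\<close>. Conversely, two factorizations at distance \<open>d\<close> that differ in two
  coordinates are joined by a \<open>(d - 1)\<close>-chain changing one coordinate at a time; the catenary
  degree of an element is the maximum of the catenary degrees of its coordinates with more than
  one factorization; and a product of two atoms with different non-unit coordinates has the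
  single length 2.\<close>

lemma image_mset_diff_if_inj_on:
  "inj_on f (set_mset A \<union> set_mset B) \<Longrightarrow> image_mset f (A - B) = image_mset f A - image_mset f B"
proof (induction B arbitrary: A)
  case (add b B)
  have inj: "inj_on f (set_mset (A - {#b#}) \<union> set_mset B)"
    by (rule inj_on_subset[OF add.prems]) (auto dest: in_diffD)
  have "image_mset f (A - {#b#}) = image_mset f A - {#f b#}"
  proof (cases "b \<in># A")
    case True
    then show ?thesis by (metis image_mset_Diff image_mset_single single_subset_iff)
  next
    case False
    then have "f b \<notin># image_mset f A" using add.prems by (auto simp: inj_on_def)
    then show ?thesis using False by (simp add: diff_single_trivial)
  qed
  then show ?case using add.IH[OF inj] by (simp add: diff_diff_add)
qed simp

lemma sum_diff_sum_if_disjoint: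
  fixes A B :: "nat \<Rightarrow> 'c multiset"
  assumes "\<And>i j. i < k \<Longrightarrow> j < k \<Longrightarrow> i \<noteq> j \<Longrightarrow> set_mset (A i + B i) \<inter> set_mset (A j + B j) = {}"
  shows "(\<Sum>i<k. A i) - (\<Sum>i<k. B i) = (\<Sum>i<k. A i - B i)"
  using assms
proof (induction k)
  case (Suc k)
  have "set_mset (A k + B k) \<inter> set_mset (A i + B i) = {}" if "i < k" for i
    using Suc.prems[of k i] that by simp
  then have disj: "set_mset (A k + B k) \<inter> set_mset ((\<Sum>i<k. A i) + (\<Sum>i<k. B i)) = {}"
    by (auto simp: set_mset_sum)
  have "(\<Sum>i<Suc k. A i) - (\<Sum>i<Suc k. B i) = ((\<Sum>i<k. A i) - (\<Sum>i<k. B i)) + (A k - B k)"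
  proof (rule multiset_eqI)
    fix x
    show "count ((\<Sum>i<Suc k. A i) - (\<Sum>i<Suc k. B i)) x =
          count ((\<Sum>i<k. A i) - (\<Sum>i<k. B i) + (A k - B k)) x"
    proof (cases "x \<in># A k + B k")
      case True
      then have "x \<notin># (\<Sum>i<k. A i)" "x \<notin># (\<Sum>i<k. B i)" using disj by auto
      then show ?thesis by (simp add: not_in_iff)
    next
      case False
      then show ?thesis by (simp add: not_in_iff)
    qed
  qed
  then show ?case using Suc.IH Suc.prems by simp
qed simp

lemma concat_map_upt_if_eq:
  "concat (map (\<lambda>i. if i = j then xs else []) [0..<m]) = (if j < m then xs else [])"
  by (induction m) auto

lemma Least_Ball_eq_Max_Least:
  fixes Q :: "'i \<Rightarrow> nat \<Rightarrow> bool"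
  assumes K: "finite K" "K \<noteq> {}"
    and mono: "\<And>k N M. k \<in> K \<Longrightarrow> N \<le> M \<Longrightarrow> Q k N \<Longrightarrow> Q k M"
    and ex: "\<And>k. k \<in> K \<Longrightarrow> \<exists>N. Q k N"
  shows "(LEAST N. \<forall>k\<in>K. Q k N) = Max ((\<lambda>k. LEAST N. Q k N) ` K)"
proof (rule Least_equality)
  have "Q k (LEAST N. Q k N)" if "k \<in> K" for k
    by (rule LeastI_ex[OF ex[OF that]])
  then show "\<forall>k\<in>K. Q k (Max ((\<lambda>k. LEAST N. Q k N) ` K))"
    using K mono by (meson Max_ge finite_imageI imageI)
next
  fix N assume "\<forall>k\<in>K. Q k N"
  then show "Max ((\<lambda>k. LEAST N. Q k N) ` K) \<le> N"
    using K by (auto intro: Least_le)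
qed

section \<open>Distances and chains of factorizations\<close>

lemma fdist_eq_0_iff: "fdist x y = 0 \<longleftrightarrow> x = y"
  unfolding fdist_def by (auto simp: Diff_eq_empty_iff_mset subset_mset.antisym)

lemma fdist_le_max_size: "fdist x y \<le> max (size x) (size y)"
  unfolding fdist_def using size_mset_mono[of "x - y" x] size_mset_mono[of "y - x" y] by auto

lemma is_chain_refl: "z \<in> Z \<Longrightarrow> is_chain Z N z z"
  unfolding is_chain_def by (rule exI[of _ "[z]"]) auto

lemma is_chain_Cons:
  assumes "x \<in> Z" "fdist x y \<le> N" "is_chain Z N y z"
  shows "is_chain Z N x z"
proof -
  obtain zs where zs: "zs \<noteq> []" "hd zs = y" "last zs = z" "set zs \<subseteq> Z"
    "\<forall>i. Suc i < length zs \<longrightarrow> fdist (zs ! i) (zs ! Suc i) \<le> N"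
    using assms(3) unfolding is_chain_def by blast
  have "fdist ((x # zs) ! i) ((x # zs) ! Suc i) \<le> N" if "Suc i < length (x # zs)" for i
    using zs assms(2) that by (cases i) (auto simp: hd_conv_nth)
  then show ?thesis
    unfolding is_chain_def using zs assms(1) by (intro exI[of _ "x # zs"]) auto
qed

lemma is_chain_step: "z \<in> Z \<Longrightarrow> z' \<in> Z \<Longrightarrow> fdist z z' \<le> N \<Longrightarrow> is_chain Z N z z'"
  by (rule is_chain_Cons[OF _ _ is_chain_refl])

lemma is_chain_induct [consumes 1, case_names refl step]:
  assumes "is_chain Z N x z"
    and refl: "\<And>x. x \<in> Z \<Longrightarrow> Q x x"
    and step: "\<And>x y. x \<in> Z \<Longrightarrow> fdist x y \<le> N \<Longrightarrow> is_chain Z N y z \<Longrightarrow> Q y z \<Longrightarrow> Q x z"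
  shows "Q x z"
proof -
  obtain zs where "zs \<noteq> []" "hd zs = x" "last zs = z" "set zs \<subseteq> Z"
    "\<forall>i. Suc i < length zs \<longrightarrow> fdist (zs ! i) (zs ! Suc i) \<le> N"
    using assms(1) unfolding is_chain_def by blast
  then show ?thesis
  proof (induction zs arbitrary: x)
    case (Cons y zs)
    show ?case
    proof (cases zs)
      case Nil
      then show ?thesis using Cons.prems refl by simp
    next
      case (Cons y' zs')
      have steps: "\<forall>i. Suc i < length zs \<longrightarrow> fdist (zs ! i) (zs ! Suc i) \<le> N"
        using Cons.prems(5) by auto
      have "is_chain Z N (hd zs) z"
        unfolding is_chain_def using Cons.prems steps \<open>zs = y' # zs'\<close> by (intro exI[of _ zs]) auto
      moreover have "fdist x (hd zs) \<le> N"
        using Cons.prems(2,5) spec[OF Cons.prems(5), of 0] \<open>zs = y' # zs'\<close> by simp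
      moreover have "Q (hd zs) z"
        using Cons.IH[of "hd zs"] Cons.prems steps \<open>zs = y' # zs'\<close> by simp
      ultimately show ?thesis using step Cons.prems by auto
    qed
  qed simp
qed

lemma is_chain_trans: "is_chain Z N x y \<Longrightarrow> is_chain Z N y z \<Longrightarrow> is_chain Z N x z"
  by (induction rule: is_chain_induct) (auto intro: is_chain_Cons)

lemma is_chain_map:
  assumes "is_chain Z N x z" "\<And>x. x \<in> Z \<Longrightarrow> f x \<in> Z'"
    "\<And>x y. x \<in> Z \<Longrightarrow> y \<in> Z \<Longrightarrow> fdist x y \<le> N \<Longrightarrow> fdist (f x) (f y) \<le> M"
  shows "is_chain Z' M (f x) (f z)"
proof -
  obtain zs where zs: "zs \<noteq> []" "hd zs = x" "last zs = z" "set zs \<subseteq> Z"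
    "\<forall>i. Suc i < length zs \<longrightarrow> fdist (zs ! i) (zs ! Suc i) \<le> N"
    using assms(1) unfolding is_chain_def by blast
  have "fdist (map f zs ! i) (map f zs ! Suc i) \<le> M" if i: "Suc i < length (map f zs)" for i
  proof -
    have "zs ! i \<in> Z" "zs ! Suc i \<in> Z" using zs(4) i by auto
    then show ?thesis using assms(3) zs(5) i by simp
  qed
  then show ?thesis
    unfolding is_chain_def using zs assms(2) by (intro exI[of _ "map f zs"]) (auto simp: hd_map last_map)
qed

definition chain_connected :: "'c multiset set \<Rightarrow> nat \<Rightarrow> bool" where
  "chain_connected Z N \<longleftrightarrow> (\<forall>z\<in>Z. \<forall>z'\<in>Z. is_chain Z N z z')"

lemma catenary_degree_eq_Least: "catenary_degree K a = (LEAST N. chain_connected (Zs K a) N)"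
  by (simp add: catenary_degree_def chain_connected_def)

lemma chain_connected_mono: "N \<le> M \<Longrightarrow> chain_connected Z N \<Longrightarrow> chain_connected Z M"
  unfolding chain_connected_def using is_chain_map[of Z N _ _ id Z M] by auto

lemma chain_connected_subsingleton: "(\<And>z z'. z \<in> Z \<Longrightarrow> z' \<in> Z \<Longrightarrow> z = z') \<Longrightarrow> chain_connected Z N"
  unfolding chain_connected_def by (metis is_chain_refl)

lemma chain_connected_Max_Ls:
  assumes "finite (Ls K a)" shows "chain_connected (Zs K a) (Max (Ls K a))"
  unfolding chain_connected_def
proof (intro ballI)
  fix z z' assume z: "z \<in> Zs K a" "z' \<in> Zs K a"
  then have "size z \<le> Max (Ls K a)" "size z' \<le> Max (Ls K a)"
    using assms by (auto simp: Ls_def)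
  then show "is_chain (Zs K a) (Max (Ls K a)) z z'"
    using is_chain_step[OF z] fdist_le_max_size[of z z'] by simp
qed

lemma is_chain_isometry_iff:
  assumes bij: "bij_betw f Z Z'"
    and iso: "\<And>x y. x \<in> Z \<Longrightarrow> y \<in> Z \<Longrightarrow> fdist (f x) (f y) = fdist x y"
    and x: "x \<in> Z" and z: "z \<in> Z"
  shows "is_chain Z' N (f x) (f z) \<longleftrightarrow> is_chain Z N x z"
proof
  let ?g = "inv_into Z f"
  have g: "?g x' \<in> Z" "f (?g x') = x'" if "x' \<in> Z'" for x'
    using that bij by (auto simp: bij_betw_def inv_into_into f_inv_into_f)
  assume "is_chain Z' N (f x) (f z)"
  then have "is_chain Z N (?g (f x)) (?g (f z))"
    by (rule is_chain_map) (use g iso in metis)+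
  then show "is_chain Z N x z"
    using x z bij by (simp add: bij_betw_inv_into_left)
next
  assume "is_chain Z N x z"
  then show "is_chain Z' N (f x) (f z)"
    by (rule is_chain_map) (use bij iso in \<open>auto simp: bij_betw_def\<close>)
qed

lemma chain_connected_isometry_iff:
  assumes bij: "bij_betw f Z Z'"
    and iso: "\<And>x y. x \<in> Z \<Longrightarrow> y \<in> Z \<Longrightarrow> fdist (f x) (f y) = fdist x y"
  shows "chain_connected Z' N \<longleftrightarrow> chain_connected Z N"
  using bij is_chain_isometry_iff[OF bij iso]
  by (auto simp: chain_connected_def bij_betw_def)

section \<open>Factorizations in a commutative cancellative monoid\<close>

definition atom_classes :: "('a, 'b) monoid_scheme \<Rightarrow> 'a set set" where
  "atom_classes K = assocs K ` atoms K"

lemma assocs_eq_Collect: "assocs M x = {y \<in> carrier M. y \<sim>\<^bsub>M\<^esub> x}"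
  by (simp add: eq_closure_of_def elem_def)

lemma atom_classes_subset_Pow: "atom_classes K \<subseteq> Pow (carrier K)"
  by (auto simp: atom_classes_def assocs_eq_Collect)

lemma ZsE:
  assumes "M \<in> Zs K a"
  obtains as where "set as \<subseteq> carrier K" "wfactors K as a" "fmset K as = M"
  using assms unfolding Zs_def by blast

lemma Zs_subset_atom_classes: "M \<in> Zs K a \<Longrightarrow> set_mset M \<subseteq> atom_classes K"
  by (elim ZsE) (force simp: fmset_def atom_classes_def atoms_def wfactors_def)

lemma (in comm_monoid) multlist_assoc_filter_nonunits:
  "set xs \<subseteq> carrier G \<Longrightarrow> foldr (\<otimes>) xs \<one> \<sim> foldr (\<otimes>) (filter (\<lambda>x. x \<notin> Units G) xs) \<one>"
proof (induction xs)
  case (Cons x xs)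
  have x: "x \<in> carrier G" and xs: "set xs \<subseteq> carrier G" using Cons.prems by auto
  have closed: "foldr (\<otimes>) xs \<one> \<in> carrier G" "foldr (\<otimes>) (filter (\<lambda>x. x \<notin> Units G) xs) \<one> \<in> carrier G"
    using xs by (auto intro!: multlist_closed)
  show ?case
  proof (cases "x \<in> Units G")
    case True
    have "x \<otimes> foldr (\<otimes>) xs \<one> \<sim> foldr (\<otimes>) xs \<one>"
      by (rule associatedI2[OF True]) (simp_all add: m_comm x closed)
    then show ?thesis using True Cons.IH[OF xs] associated_trans x closed by simp
  next
    case False
    then show ?thesis using mult_cong_r[OF Cons.IH[OF xs] x closed] by simp
  qed
qed simp

context comm_monoid_cancel
begin

lemma Zs_Units: "u \<in> Units G \<Longrightarrow> Zs G u = {{#}}"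
  unfolding Zs_def using unit_wfactors unit_wfactors_empty by (fastforce simp: fmset_def)

lemma size_Zs_irreducible:
  assumes x: "x \<in> carrier G" "irreducible G x" and M: "M \<in> Zs G x"
  shows "size M = 1"
proof -
  obtain as where as: "set as \<subseteq> carrier G" "wfactors G as x" "fmset G as = M"
    using M by (rule ZsE)
  have irr: "\<forall>y\<in>set as. irreducible G y" and prod: "foldr (\<otimes>) as \<one> \<sim> x"
    using as(2) by (auto simp: wfactors_def)
  have "x \<notin> Units G" using x(2) by (simp add: irreducible_def)
  consider "as = []" | p where "as = [p]" | p q r where "as = p # q # r"
    by (metis list.exhaust)
  then have "length as = 1"
  proof cases
    case 1
    then show ?thesis using prod Units_cong[OF Units_one_closed _ x(1)] \<open>x \<notin> Units G\<close> by simp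
  next
    case (3 p q r)
    have p: "p \<in> carrier G" and q: "q \<in> carrier G" and r: "set r \<subseteq> carrier G"
      using as(1) 3 by auto
    have "irreducible G (p \<otimes> (q \<otimes> foldr (\<otimes>) r \<one>))"
      using irreducible_cong[OF x(2) associated_sym] prod 3 p q r x(1) by (simp add: multlist_closed)
    then have "p \<in> Units G \<or> q \<in> Units G"
      by (rule irreducible_prodE) (use p q r unit_factor[of q] in \<open>auto simp: multlist_closed\<close>)
    then show ?thesis using irr 3 by (auto simp: irreducible_def)
  qed simp
  then show ?thesis using as(3) by (auto simp: fmset_def)
qed

lemma Zs_subseteq_mset_imp_eq:
  assumes x: "x \<in> carrier G" and y: "y \<in> Zs G x" "y' \<in> Zs G x" and le: "y \<subseteq># y'"
  shows "y = y'"
proof -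
  obtain as where as: "set as \<subseteq> carrier G" "wfactors G as x" "fmset G as = y"
    using y(1) by (rule ZsE)
  obtain bs where bs: "set bs \<subseteq> carrier G" "wfactors G bs x" "fmset G bs = y'"
    using y(2) by (rule ZsE)
  have "set_mset (y' - y) \<subseteq> atom_classes G"
    using Zs_subset_atom_classes[OF y(2)] by (auto dest: in_diffD)
  then obtain c cs where c: "c \<in> carrier G" "set cs \<subseteq> carrier G" "wfactors G cs c"
    "fmset G cs = y' - y"
    using mset_wfactorsEx[of "y' - y"] by (auto simp: atom_classes_def atoms_def)
  have "fmset G bs = fmset G as + fmset G cs" using as(3) bs(3) c(4) le by simp
  then have "x \<sim> x \<otimes> c" by (rule fmset_wfactors_mult) (use x c as bs in auto)
  then have "\<one> \<sim> c" using assoc_l_cancel[OF x one_closed c(1)] x by simp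
  then have "cs = []" using Units_cong[OF Units_one_closed _ c(1)] unit_wfactors_empty c by blast
  then show ?thesis using c(4) le by (simp add: fmset_def Diff_eq_empty_iff_mset subset_mset.antisym)
qed

end

section \<open>The product monoid\<close>

locale monoid_product =
  fixes n :: nat and H :: "nat \<Rightarrow> ('a, 'b) monoid_scheme"
  assumes comm_monoid_cancel_factor: "\<And>i. i < n \<Longrightarrow> comm_monoid_cancel (H i)"
begin

abbreviation G :: "(nat \<Rightarrow> 'a) monoid" where "G \<equiv> prodM n H"

lemma carrier_G: "carrier G = (\<Pi>\<^sub>E i\<in>{..<n}. carrier (H i))"
  by (simp add: prodM_def)

lemma mult_G: "x \<otimes>\<^bsub>G\<^esub> y = (\<lambda>i\<in>{..<n}. x i \<otimes>\<^bsub>H i\<^esub> y i)"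
  by (simp add: prodM_def)

lemma one_G: "\<one>\<^bsub>G\<^esub> = (\<lambda>i\<in>{..<n}. \<one>\<^bsub>H i\<^esub>)"
  by (simp add: prodM_def)

lemma mult_apply: "i < n \<Longrightarrow> (x \<otimes>\<^bsub>G\<^esub> y) i = x i \<otimes>\<^bsub>H i\<^esub> y i"
  by (simp add: mult_G)

lemma one_apply: "i < n \<Longrightarrow> \<one>\<^bsub>G\<^esub> i = \<one>\<^bsub>H i\<^esub>"
  by (simp add: one_G)

lemma comm_monoid_factor: "i < n \<Longrightarrow> comm_monoid (H i)"
  using comm_monoid_cancel_factor comm_monoid_cancel.axioms(2) by blast

lemma monoid_factor: "i < n \<Longrightarrow> monoid (H i)"
  using comm_monoid_factor comm_monoid.axioms(1) by blast

lemma carrier_apply: "x \<in> carrier G \<Longrightarrow> i < n \<Longrightarrow> x i \<in> carrier (H i)"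
  by (auto simp: carrier_G)

lemma carrier_eqI: "x \<in> carrier G \<Longrightarrow> y \<in> carrier G \<Longrightarrow> (\<And>i. i < n \<Longrightarrow> x i = y i) \<Longrightarrow> x = y"
  unfolding carrier_G by (rule PiE_ext) auto

lemma fun_upd_in_carrier: "f \<in> carrier G \<Longrightarrow> i < n \<Longrightarrow> c \<in> carrier (H i) \<Longrightarrow> f(i := c) \<in> carrier G"
  unfolding carrier_G using PiE_fun_upd[of c "\<lambda>i. carrier (H i)" i f "{..<n}"] by (simp add: insert_absorb)

lemma mult_closed_G: "x \<in> carrier G \<Longrightarrow> y \<in> carrier G \<Longrightarrow> x \<otimes>\<^bsub>G\<^esub> y \<in> carrier G"
  unfolding mult_G carrier_G restrict_PiE_iff by (auto intro!: monoid.m_closed[OF monoid_factor] simp: PiE_iff)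

lemma one_closed_G: "\<one>\<^bsub>G\<^esub> \<in> carrier G"
  unfolding one_G carrier_G restrict_PiE_iff by (auto intro: monoid.one_closed[OF monoid_factor])

lemma comm_monoid_cancel_G: "comm_monoid_cancel G"
proof (rule comm_monoid_cancelI[OF comm_monoidI])
  fix x y z assume "x \<in> carrier G" "y \<in> carrier G" "z \<in> carrier G"
  then show "x \<otimes>\<^bsub>G\<^esub> y \<otimes>\<^bsub>G\<^esub> z = x \<otimes>\<^bsub>G\<^esub> (y \<otimes>\<^bsub>G\<^esub> z)"
    by (intro carrier_eqI) (simp_all add: mult_closed_G mult_apply carrier_apply monoid.m_assoc[OF monoid_factor])
next
  fix x assume "x \<in> carrier G"
  then show "\<one>\<^bsub>G\<^esub> \<otimes>\<^bsub>G\<^esub> x = x"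
    by (intro carrier_eqI) (simp_all add: mult_closed_G one_closed_G mult_apply one_apply carrier_apply
        monoid.l_one[OF monoid_factor])
next
  fix x y assume "x \<in> carrier G" "y \<in> carrier G"
  then show "x \<otimes>\<^bsub>G\<^esub> y = y \<otimes>\<^bsub>G\<^esub> x"
    by (intro carrier_eqI) (simp_all add: mult_closed_G mult_apply carrier_apply
        comm_monoid.m_comm[OF comm_monoid_factor])
next
  fix a b c assume eq: "a \<otimes>\<^bsub>G\<^esub> c = b \<otimes>\<^bsub>G\<^esub> c" and abc: "a \<in> carrier G" "b \<in> carrier G" "c \<in> carrier G"
  show "a = b"
  proof (rule carrier_eqI[OF abc(1,2)])
    fix i assume i: "i < n"
    have "a i \<otimes>\<^bsub>H i\<^esub> c i = b i \<otimes>\<^bsub>H i\<^esub> c i" using arg_cong[OF eq, of "\<lambda>f. f i"] i by (simp add: mult_apply)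
    then show "a i = b i"
      using monoid_cancel.r_cancel[OF comm_monoid_cancel.axioms(1)[OF comm_monoid_cancel_factor[OF i]]]
        carrier_apply abc i by blast
  qed
qed (use mult_closed_G one_closed_G in auto)

sublocale G: comm_monoid_cancel G by (rule comm_monoid_cancel_G)

lemma Units_G_iff: "f \<in> Units G \<longleftrightarrow> f \<in> carrier G \<and> (\<forall>i<n. f i \<in> Units (H i))"
proof safe
  fix i assume f: "f \<in> Units G" and i: "i < n"
  then obtain g where g: "g \<in> carrier G" "g \<otimes>\<^bsub>G\<^esub> f = \<one>\<^bsub>G\<^esub>" "f \<otimes>\<^bsub>G\<^esub> g = \<one>\<^bsub>G\<^esub>"
    unfolding Units_def by blast
  then have "g i \<otimes>\<^bsub>H i\<^esub> f i = \<one>\<^bsub>H i\<^esub>" "f i \<otimes>\<^bsub>H i\<^esub> g i = \<one>\<^bsub>H i\<^esub>"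
    using i by (metis mult_apply one_apply)+
  moreover have "g i \<in> carrier (H i)" "f i \<in> carrier (H i)"
    using g(1) f i G.Units_closed carrier_apply by blast+
  ultimately show "f i \<in> Units (H i)" unfolding Units_def by blast
next
  assume f: "f \<in> carrier G" and u: "\<forall>i<n. f i \<in> Units (H i)"
  define g where "g = (\<lambda>i\<in>{..<n}. inv\<^bsub>H i\<^esub> (f i))"
  have g: "g \<in> carrier G"
    using u unfolding g_def carrier_G restrict_PiE_iff by (auto intro: monoid.Units_inv_closed[OF monoid_factor])
  have "g \<otimes>\<^bsub>G\<^esub> f = \<one>\<^bsub>G\<^esub>"
    by (rule carrier_eqI)
      (use f g u in \<open>simp_all add: mult_closed_G one_closed_G mult_apply one_apply g_def monoid.Units_l_inv[OF monoid_factor]\<close>)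
  moreover have "f \<otimes>\<^bsub>G\<^esub> g = \<one>\<^bsub>G\<^esub>"
    by (rule carrier_eqI)
      (use f g u in \<open>simp_all add: mult_closed_G one_closed_G mult_apply one_apply g_def monoid.Units_r_inv[OF monoid_factor]\<close>)
  ultimately show "f \<in> Units G" using f g unfolding Units_def by blast
next
  show "f \<in> Units G \<Longrightarrow> f \<in> carrier G" by (rule G.Units_closed)
qed

lemma divides_G_iff:
  assumes f: "f \<in> carrier G" and g: "g \<in> carrier G"
  shows "f divides\<^bsub>G\<^esub> g \<longleftrightarrow> (\<forall>i<n. f i divides\<^bsub>H i\<^esub> g i)"
proof
  assume "f divides\<^bsub>G\<^esub> g"
  then show "\<forall>i<n. f i divides\<^bsub>H i\<^esub> g i"
    by (auto simp: factor_def mult_apply intro: carrier_apply)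
next
  assume "\<forall>i<n. f i divides\<^bsub>H i\<^esub> g i"
  then have "\<forall>i\<in>{..<n}. \<exists>c\<in>carrier (H i). g i = f i \<otimes>\<^bsub>H i\<^esub> c"
    by (auto simp: factor_def)
  then obtain c where c: "\<And>i. i < n \<Longrightarrow> c i \<in> carrier (H i) \<and> g i = f i \<otimes>\<^bsub>H i\<^esub> c i"
    by (metis lessThan_iff)
  have "restrict c {..<n} \<in> carrier G" "g = f \<otimes>\<^bsub>G\<^esub> restrict c {..<n}"
    using c f g by (auto simp: carrier_G mult_apply intro!: carrier_eqI)
  then show "f divides\<^bsub>G\<^esub> g" by (auto simp: factor_def)
qed

lemma associated_G_iff:
  "f \<in> carrier G \<Longrightarrow> g \<in> carrier G \<Longrightarrow> f \<sim>\<^bsub>G\<^esub> g \<longleftrightarrow> (\<forall>i<n. f i \<sim>\<^bsub>H i\<^esub> g i)"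
  using divides_G_iff divides_G_iff[of g f] by (auto simp: associated_def)

lemma properfactor_fun_upd:
  assumes f: "f \<in> carrier G" and i: "i < n" and c: "c \<in> carrier (H i)" "properfactor (H i) c (f i)"
  shows "properfactor G (f(i := c)) f"
proof -
  have fc: "f(i := c) \<in> carrier G" by (rule fun_upd_in_carrier[OF f i c(1)])
  have "f(i := c) divides\<^bsub>G\<^esub> f"
    using c(2) f by (auto simp: divides_G_iff[OF fc f] properfactor_def carrier_apply
        intro: monoid.divides_refl[OF monoid_factor])
  moreover have "\<not> f divides\<^bsub>G\<^esub> f(i := c)"
    using c(2) i by (auto simp: divides_G_iff[OF f fc] properfactor_def)
  ultimately show ?thesis by (rule properfactorI)
qed

lemma irreducible_G_I:
  assumes f: "f \<in> carrier G" and i: "i < n" and irr: "irreducible (H i) (f i)"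
    and u: "\<And>k. k < n \<Longrightarrow> k \<noteq> i \<Longrightarrow> f k \<in> Units (H k)"
  shows "irreducible G f"
proof (rule irreducibleI)
  show "f \<notin> Units G" using irr i by (auto simp: Units_G_iff irreducible_def)
next
  fix b assume b: "b \<in> carrier G" "properfactor G b f"
  have bf: "b k divides\<^bsub>H k\<^esub> f k" if "k < n" for k
    using b that divides_G_iff[OF b(1) f] by (auto simp: properfactor_def)
  have "f k divides\<^bsub>H k\<^esub> b k" if "k < n" "k \<noteq> i" for k
    using monoid.unit_divides[OF monoid_factor u carrier_apply[OF b(1)]] that by blast
  then have "\<not> f i divides\<^bsub>H i\<^esub> b i"
    using b divides_G_iff[OF f b(1)] by (auto simp: properfactor_def)
  then have "b i \<in> Units (H i)"
    using irreducibleD[OF irr _ carrier_apply[OF b(1) i]] bf[OF i] by (simp add: properfactor_def)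
  moreover have "b k \<in> Units (H k)" if "k < n" "k \<noteq> i" for k
    using comm_monoid.divides_unit[OF comm_monoid_factor[OF that(1)] bf[OF that(1)]
        carrier_apply[OF b(1) that(1)] u[OF that]] .
  ultimately show "b \<in> Units G" using b(1) by (auto simp: Units_G_iff)
qed

lemma irreducible_G_D:
  assumes f: "f \<in> carrier G" and irr: "irreducible G f" and i: "i < n" and ni: "f i \<notin> Units (H i)"
  shows "irreducible (H i) (f i)" and "\<And>k. k < n \<Longrightarrow> k \<noteq> i \<Longrightarrow> f k \<in> Units (H k)"
proof -
  show "f k \<in> Units (H k)" if k: "k < n" "k \<noteq> i" for k
  proof (rule ccontr)
    assume "f k \<notin> Units (H k)"
    then have "properfactor (H k) \<one>\<^bsub>H k\<^esub> (f k)"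
      using comm_monoid.Unit_eq_dividesone[OF comm_monoid_factor[OF k(1)] carrier_apply[OF f k(1)]]
        monoid.unit_divides[OF monoid_factor[OF k(1)] monoid.Units_one_closed[OF monoid_factor[OF k(1)]]
          carrier_apply[OF f k(1)]]
      by (auto simp: properfactor_def)
    then have "f(k := \<one>\<^bsub>H k\<^esub>) \<in> Units G"
      using irreducibleD[OF irr properfactor_fun_upd] f k monoid.one_closed[OF monoid_factor]
        fun_upd_in_carrier by blast
    then have "(f(k := \<one>\<^bsub>H k\<^esub>)) i \<in> Units (H i)"
      using i unfolding Units_G_iff by blast
    then show False using ni k by simp
  qed
  show "irreducible (H i) (f i)"
  proof (rule irreducibleI[OF ni])
    fix c assume "c \<in> carrier (H i)" "properfactor (H i) c (f i)"
    then have "f(i := c) \<in> Units G"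
      using irreducibleD[OF irr properfactor_fun_upd] f i fun_upd_in_carrier by blast
    then have "(f(i := c)) i \<in> Units (H i)"
      using i unfolding Units_G_iff by blast
    then show "c \<in> Units (H i)" by simp
  qed
qed

lemma irreducible_G_E:
  assumes f: "f \<in> carrier G" and irr: "irreducible G f"
  obtains i where "i < n" "irreducible (H i) (f i)" "\<And>k. k < n \<Longrightarrow> k \<noteq> i \<Longrightarrow> f k \<in> Units (H k)"
proof -
  obtain i where "i < n" "f i \<notin> Units (H i)"
    using irr f by (auto simp: irreducible_def Units_G_iff)
  then show thesis using that irreducible_G_D[OF f irr] by blast
qed

definition single :: "nat \<Rightarrow> 'a \<Rightarrow> nat \<Rightarrow> 'a" where
  "single i x = \<one>\<^bsub>G\<^esub>(i := x)"

lemma single_in_carrier: "i < n \<Longrightarrow> x \<in> carrier (H i) \<Longrightarrow> single i x \<in> carrier G"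
  unfolding single_def by (rule fun_upd_in_carrier[OF one_closed_G])

lemma single_apply_same [simp]: "single i x i = x"
  by (simp add: single_def)

lemma single_apply_other [simp]: "k < n \<Longrightarrow> k \<noteq> i \<Longrightarrow> single i x k = \<one>\<^bsub>H k\<^esub>"
  by (simp add: single_def one_apply)

lemma single_apply_Units: "k < n \<Longrightarrow> k \<noteq> i \<Longrightarrow> single i x k \<in> Units (H k)"
  by (simp add: monoid.Units_one_closed[OF monoid_factor])

lemma irreducible_single:
  "i < n \<Longrightarrow> x \<in> carrier (H i) \<Longrightarrow> irreducible (H i) x \<Longrightarrow> irreducible G (single i x)"
  by (rule irreducible_G_I[OF single_in_carrier]) (auto intro: single_apply_Units)

lemma single_mult:
  assumes i: "i < n" and x: "x \<in> carrier (H i)" and y: "y \<in> carrier (H i)"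
  shows "single i x \<otimes>\<^bsub>G\<^esub> single i y = single i (x \<otimes>\<^bsub>H i\<^esub> y)"
proof (rule carrier_eqI)
  fix k assume "k < n"
  then show "(single i x \<otimes>\<^bsub>G\<^esub> single i y) k = single i (x \<otimes>\<^bsub>H i\<^esub> y) k"
    by (cases "k = i") (simp_all add: mult_apply monoid.l_one[OF monoid_factor] monoid.one_closed[OF monoid_factor])
qed (use assms in \<open>simp_all add: single_in_carrier monoid.m_closed[OF monoid_factor]\<close>)

text \<open>Identifies the atom classes of \<open>H i\<close> with the atom classes of the product whose
  non-unit coordinate is \<open>i\<close>.\<close>

definition lift_class :: "nat \<Rightarrow> 'a set \<Rightarrow> (nat \<Rightarrow> 'a) set" where
  "lift_class i C = {f \<in> carrier G. f i \<in> C \<and> (\<forall>k<n. k \<noteq> i \<longrightarrow> f k \<in> Units (H k))}"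

lemma assocs_G_irreducible:
  assumes f: "f \<in> carrier G" and irr: "irreducible G f" and i: "i < n" and ni: "f i \<notin> Units (H i)"
  shows "assocs G f = lift_class i (assocs (H i) (f i))"
proof -
  note u = irreducible_G_D(2)[OF f irr i ni]
  have "y \<sim>\<^bsub>G\<^esub> f \<longleftrightarrow> y i \<sim>\<^bsub>H i\<^esub> f i \<and> (\<forall>k<n. k \<noteq> i \<longrightarrow> y k \<in> Units (H k))"
    if y: "y \<in> carrier G" for y
  proof -
    have "y k \<sim>\<^bsub>H k\<^esub> f k \<longleftrightarrow> y k \<in> Units (H k)" if k: "k < n" "k \<noteq> i" for k
      using monoid_cancel.assoc_unit_l[OF comm_monoid_cancel.axioms(1)[OF comm_monoid_cancel_factor[OF k(1)]]
          _ u[OF k] carrier_apply[OF y k(1)]]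
        monoid.Units_assoc[OF monoid_factor[OF k(1)] _ u[OF k]] by blast
    then show ?thesis using associated_G_iff[OF y f] i by metis
  qed
  then show ?thesis unfolding assocs_eq_Collect lift_class_def using carrier_apply[OF _ i] by blast
qed

lemma single_in_lift_class_iff:
  "i < n \<Longrightarrow> x \<in> carrier (H i) \<Longrightarrow> single i x \<in> lift_class i C \<longleftrightarrow> x \<in> C"
  by (auto simp: lift_class_def single_in_carrier monoid.Units_one_closed[OF monoid_factor])

lemma inj_on_lift_class: "i < n \<Longrightarrow> inj_on (lift_class i) (Pow (carrier (H i)))"
  by (rule inj_onI) (metis PowD single_in_lift_class_iff subsetD subset_antisym subsetI)

lemma lift_class_neq:
  assumes i: "i < n" and j: "j \<noteq> i" and C: "C \<in> atom_classes (H i)"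
  shows "lift_class i C \<noteq> lift_class j C'"
proof -
  obtain x where x: "x \<in> carrier (H i)" "irreducible (H i) x" "C = assocs (H i) x"
    using C by (auto simp: atom_classes_def atoms_def)
  have "single i x \<in> lift_class i C"
    using x i monoid.assocs_self[OF monoid_factor] by (simp add: single_in_lift_class_iff)
  moreover have "single i x \<notin> lift_class j C'"
    using x(2) i j by (auto simp: lift_class_def irreducible_def)
  ultimately show ?thesis by blast
qed

section \<open>Factorizations in the product\<close>

definition component_factors :: "(nat \<Rightarrow> 'a) list \<Rightarrow> nat \<Rightarrow> 'a list" where
  "component_factors as i = map (\<lambda>f. f i) (filter (\<lambda>f. f i \<notin> Units (H i)) as)"

lemma multlist_apply:
  "set as \<subseteq> carrier G \<Longrightarrow> i < n \<Longrightarrow>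
   (foldr (\<otimes>\<^bsub>G\<^esub>) as \<one>\<^bsub>G\<^esub>) i = foldr (\<otimes>\<^bsub>H i\<^esub>) (map (\<lambda>f. f i) as) \<one>\<^bsub>H i\<^esub>"
  by (induction as) (simp_all add: mult_apply one_apply)

lemma wfactors_G_iff:
  assumes as: "set as \<subseteq> carrier G" "\<forall>f\<in>set as. irreducible G f" and a: "a \<in> carrier G"
  shows "wfactors G as a \<longleftrightarrow> (\<forall>i<n. wfactors (H i) (component_factors as i) (a i))"
proof -
  have "irreducible (H i) x" if "i < n" "x \<in> set (component_factors as i)" for i x
    using that as irreducible_G_D(1) by (auto simp: component_factors_def)
  moreover have "foldr (\<otimes>\<^bsub>G\<^esub>) as \<one>\<^bsub>G\<^esub> \<sim>\<^bsub>G\<^esub> a \<longleftrightarrow>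
      (\<forall>i<n. foldr (\<otimes>\<^bsub>H i\<^esub>) (component_factors as i) \<one>\<^bsub>H i\<^esub> \<sim>\<^bsub>H i\<^esub> a i)"
  proof -
    have "foldr (\<otimes>\<^bsub>H i\<^esub>) (map (\<lambda>f. f i) as) \<one>\<^bsub>H i\<^esub> \<sim>\<^bsub>H i\<^esub> b \<longleftrightarrow>
        foldr (\<otimes>\<^bsub>H i\<^esub>) (component_factors as i) \<one>\<^bsub>H i\<^esub> \<sim>\<^bsub>H i\<^esub> b"
      if i: "i < n" and b: "b \<in> carrier (H i)" for i b
    proof -
      interpret Hi: comm_monoid_cancel "H i" by (rule comm_monoid_cancel_factor[OF i])
      have closed: "set (map (\<lambda>f. f i) as) \<subseteq> carrier (H i)"
        using as(1) carrier_apply[OF _ i] by auto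
      have "component_factors as i = filter (\<lambda>x. x \<notin> Units (H i)) (map (\<lambda>f. f i) as)"
        by (simp add: component_factors_def filter_map comp_def)
      then have "foldr (\<otimes>\<^bsub>H i\<^esub>) (map (\<lambda>f. f i) as) \<one>\<^bsub>H i\<^esub> \<sim>\<^bsub>H i\<^esub>
          foldr (\<otimes>\<^bsub>H i\<^esub>) (component_factors as i) \<one>\<^bsub>H i\<^esub>"
        using Hi.multlist_assoc_filter_nonunits[OF closed] by simp
      moreover have "set (component_factors as i) \<subseteq> carrier (H i)"
        using closed by (auto simp: component_factors_def)
      ultimately show ?thesis
        using closed b by (meson Hi.associated_sym Hi.associated_trans Hi.multlist_closed)
    qed
    then show ?thesis
      using associated_G_iff[OF G.multlist_closed[OF as(1)] a] multlist_apply[OF as(1)] carrier_apply[OF a]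
      by simp
  qed
  ultimately show ?thesis using as by (auto simp: wfactors_def)
qed

definition merge :: "(nat \<Rightarrow> 'a set multiset) \<Rightarrow> (nat \<Rightarrow> 'a) set multiset" where
  "merge W = (\<Sum>i<n. image_mset (lift_class i) (W i))"

lemma merge_cong: "(\<And>i. i < n \<Longrightarrow> W i = W' i) \<Longrightarrow> merge W = merge W'"
  unfolding merge_def by (rule sum.cong) auto

lemma fmset_G_eq_merge:
  "\<forall>f\<in>set as. f \<in> carrier G \<and> irreducible G f \<Longrightarrow>
   fmset G as = merge (\<lambda>i. fmset (H i) (component_factors as i))"
proof (induction as)
  case Nil
  then show ?case by (simp add: merge_def fmset_def component_factors_def)
next
  case (Cons f as)
  have f: "f \<in> carrier G" "irreducible G f" using Cons.prems by auto
  obtain c where c: "c < n" "irreducible (H c) (f c)" "\<And>k. k < n \<Longrightarrow> k \<noteq> c \<Longrightarrow> f k \<in> Units (H k)"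
    using irreducible_G_E[OF f] by blast
  have "f c \<notin> Units (H c)" using c(2) by (simp add: irreducible_def)
  then have "image_mset (lift_class i) (fmset (H i) (component_factors (f # as) i)) =
      (if i = c then {#assocs G f#} else {#}) + image_mset (lift_class i) (fmset (H i) (component_factors as i))"
    if "i < n" for i
    using that c assocs_G_irreducible[OF f c(1)] by (auto simp: component_factors_def fmset_def)
  then have "merge (\<lambda>i. fmset (H i) (component_factors (f # as) i)) =
      (\<Sum>i<n. (if i = c then {#assocs G f#} else {#})) + merge (\<lambda>i. fmset (H i) (component_factors as i))"
    unfolding merge_def by (simp add: sum.distrib)
  also have "\<dots> = fmset G (f # as)" using Cons c(1) by (simp add: fmset_def)
  finally show ?case by simp
qed

definition factor_tuples :: "(nat \<Rightarrow> 'a) \<Rightarrow> (nat \<Rightarrow> 'a set multiset) set" where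
  "factor_tuples a = (\<Pi>\<^sub>E i\<in>{..<n}. Zs (H i) (a i))"

lemma factor_tuples_apply: "W \<in> factor_tuples a \<Longrightarrow> i < n \<Longrightarrow> W i \<in> Zs (H i) (a i)"
  by (auto simp: factor_tuples_def)

lemma factor_tuples_eqI:
  "W \<in> factor_tuples a \<Longrightarrow> W' \<in> factor_tuples a \<Longrightarrow> (\<And>i. i < n \<Longrightarrow> W i = W' i) \<Longrightarrow> W = W'"
  unfolding factor_tuples_def by (rule PiE_ext) auto

lemma fun_upd_in_factor_tuples:
  "W \<in> factor_tuples a \<Longrightarrow> i < n \<Longrightarrow> y \<in> Zs (H i) (a i) \<Longrightarrow> W(i := y) \<in> factor_tuples a"
  unfolding factor_tuples_def using PiE_fun_upd[of y "\<lambda>i. Zs (H i) (a i)" i W "{..<n}"]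
  by (simp add: insert_absorb)

lemma Zs_G_subset:
  assumes a: "a \<in> carrier G" and M: "M \<in> Zs G a"
  shows "M \<in> merge ` factor_tuples a"
proof -
  obtain as where as: "set as \<subseteq> carrier G" "wfactors G as a" "fmset G as = M"
    using M by (rule ZsE)
  have irr: "\<forall>f\<in>set as. irreducible G f" using as(2) by (simp add: wfactors_def)
  define W where "W = (\<lambda>i\<in>{..<n}. fmset (H i) (component_factors as i))"
  have "set (component_factors as i) \<subseteq> carrier (H i)" if "i < n" for i
    using as(1) carrier_apply[OF _ that] by (auto simp: component_factors_def)
  then have "W \<in> factor_tuples a"
    using wfactors_G_iff[OF as(1) irr a] as(2) by (auto simp: W_def factor_tuples_def Zs_def)
  moreover have "M = merge (\<lambda>i. fmset (H i) (component_factors as i))"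
    unfolding as(3)[symmetric] by (rule fmset_G_eq_merge) (use as(1) irr in auto)
  moreover have "merge (\<lambda>i. fmset (H i) (component_factors as i)) = merge W"
    by (rule merge_cong) (simp add: W_def)
  ultimately show ?thesis by blast
qed

lemma component_factors_concat_single:
  assumes j: "j < n" and nonunits: "\<forall>x\<in>set (L j). x \<notin> Units (H j)"
  shows "component_factors (concat (map (\<lambda>i. map (single i) (L i)) [0..<n])) j = L j"
proof -
  have "filter (\<lambda>f. f j \<notin> Units (H j)) (map (single i) (L i)) = (if i = j then map (single j) (L j) else [])"
    if i: "i < n" for i
  proof (cases "i = j")
    case True
    then show ?thesis using nonunits by (simp add: comp_def)
  next
    case False
    then show ?thesis using i j single_apply_Units[of j i] by (simp add: filter_empty_conv)
  qed
  then have "filter (\<lambda>f. f j \<notin> Units (H j)) (concat (map (\<lambda>i. map (single i) (L i)) [0..<n])) =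
      concat (map (\<lambda>i. if i = j then map (single j) (L j) else []) [0..<n])"
    unfolding filter_concat map_map comp_def by (intro arg_cong[where f = concat] map_cong) auto
  then show ?thesis using j by (simp add: component_factors_def concat_map_upt_if_eq comp_def)
qed

lemma Zs_G_supset:
  assumes a: "a \<in> carrier G" and W: "W \<in> factor_tuples a"
  shows "merge W \<in> Zs G a"
proof -
  have "\<exists>L. set L \<subseteq> carrier (H i) \<and> wfactors (H i) L (a i) \<and> fmset (H i) L = W i" if "i < n" for i
    using factor_tuples_apply[OF W that] by (rule ZsE) blast
  then have "\<forall>i\<in>{..<n}. \<exists>L. set L \<subseteq> carrier (H i) \<and> wfactors (H i) L (a i) \<and> fmset (H i) L = W i"
    by blast
  then obtain L where L: "\<And>i. i < n \<Longrightarrow> set (L i) \<subseteq> carrier (H i) \<and> wfactors (H i) (L i) (a i) \<and> fmset (H i) (L i) = W i"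
    by (metis lessThan_iff)
  define as where "as = concat (map (\<lambda>i. map (single i) (L i)) [0..<n])"
  have as_carrier: "set as \<subseteq> carrier G"
    using L single_in_carrier by (fastforce simp: as_def)
  have as_irr: "\<forall>f\<in>set as. irreducible G f"
    using L irreducible_single by (fastforce simp: as_def wfactors_def)
  have components: "component_factors as j = L j" if "j < n" for j
    unfolding as_def using L[OF that] that
    by (intro component_factors_concat_single) (auto simp: wfactors_def irreducible_def)
  have "wfactors G as a"
    using wfactors_G_iff[OF as_carrier as_irr a] L components by simp
  moreover have "fmset G as = merge (\<lambda>i. fmset (H i) (component_factors as i))"
    by (rule fmset_G_eq_merge) (use as_carrier as_irr in auto)
  moreover have "\<dots> = merge W"
    by (rule merge_cong) (use L components in simp)
  ultimately show ?thesis
    using as_carrier unfolding Zs_def by (metis (mono_tags, lifting) image_eqI mem_Collect_eq)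
qed

lemma Zs_G_eq: "a \<in> carrier G \<Longrightarrow> Zs G a = merge ` factor_tuples a"
  using Zs_G_subset Zs_G_supset by blast

lemma size_merge: "size (merge W) = (\<Sum>i<n. size (W i))"
  by (simp add: merge_def size_multiset_sum)

lemma merge_diff:
  assumes atoms: "\<And>i. i < n \<Longrightarrow> set_mset (W i) \<union> set_mset (W' i) \<subseteq> atom_classes (H i)"
  shows "merge W - merge W' = merge (\<lambda>i. W i - W' i)"
proof -
  have "merge W - merge W' = (\<Sum>i<n. image_mset (lift_class i) (W i) - image_mset (lift_class i) (W' i))"
    unfolding merge_def
  proof (rule sum_diff_sum_if_disjoint)
    fix i j assume ij: "i < n" "j < n" "i \<noteq> j"
    have "lift_class i C \<noteq> lift_class j C'" if "C \<in> set_mset (W i) \<union> set_mset (W' i)" for C C'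
      using lift_class_neq[of i j C C'] atoms[of i] that ij by blast
    then show "set_mset (image_mset (lift_class i) (W i) + image_mset (lift_class i) (W' i)) \<inter>
        set_mset (image_mset (lift_class j) (W j) + image_mset (lift_class j) (W' j)) = {}"
      by auto
  qed
  also have "\<dots> = merge (\<lambda>i. W i - W' i)"
    unfolding merge_def
  proof (rule sum.cong)
    fix i assume "i \<in> {..<n}"
    then have "inj_on (lift_class i) (set_mset (W i) \<union> set_mset (W' i))"
      by (intro inj_on_subset[OF inj_on_lift_class]) (use atoms atom_classes_subset_Pow in blast)+
    then show "image_mset (lift_class i) (W i) - image_mset (lift_class i) (W' i) =
        image_mset (lift_class i) (W i - W' i)"
      by (simp add: image_mset_diff_if_inj_on)
  qed simp
  finally show ?thesis .
qed

definition tuple_dist :: "(nat \<Rightarrow> 'c multiset) \<Rightarrow> (nat \<Rightarrow> 'c multiset) \<Rightarrow> nat" where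
  "tuple_dist W W' = max (\<Sum>i<n. size (W i - W' i)) (\<Sum>i<n. size (W' i - W i))"

lemma fdist_merge:
  assumes "W \<in> factor_tuples a" "W' \<in> factor_tuples b"
  shows "fdist (merge W) (merge W') = tuple_dist W W'"
proof -
  have "set_mset (W i) \<union> set_mset (W' i) \<subseteq> atom_classes (H i)" if "i < n" for i
    using assms that Zs_subset_atom_classes factor_tuples_apply by (metis Un_least)
  then show ?thesis
    unfolding fdist_def tuple_dist_def by (simp add: merge_diff size_merge Un_commute)
qed

lemma fdist_le_tuple_dist: "i < n \<Longrightarrow> fdist (W i) (W' i) \<le> tuple_dist W W'"
  unfolding fdist_def tuple_dist_def
  using member_le_sum[of i "{..<n}" "\<lambda>i. size (W i - W' i)"] member_le_sum[of i "{..<n}" "\<lambda>i. size (W' i - W i)"]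
  by auto

lemma tuple_dist_eq_fdist:
  assumes i: "i < n" and eq: "\<And>k. k < n \<Longrightarrow> k \<noteq> i \<Longrightarrow> W k = W' k"
  shows "tuple_dist W W' = fdist (W i) (W' i)"
proof -
  have "(\<Sum>k<n. size (W k - W' k)) = size (W i - W' i)" "(\<Sum>k<n. size (W' k - W k)) = size (W' i - W i)"
    using i eq by (auto intro!: sum.neutral simp: sum.remove[of "{..<n}" i])
  then show ?thesis unfolding tuple_dist_def fdist_def by simp
qed

lemma fdist_less_tuple_dist:
  assumes k: "k < n" and l: "l < n" "l \<noteq> k" and ne: "W l - W' l \<noteq> {#}" "W' l - W l \<noteq> {#}"
  shows "fdist (W k) (W' k) < tuple_dist W W'"
proof -
  have "size (U k) + size (U l) \<le> (\<Sum>j<n. size (U j))" for U :: "nat \<Rightarrow> 'c multiset"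
    using sum_mono2[of "{..<n}" "{k, l}" "\<lambda>j. size (U j)"] k l by simp
  from this[of "\<lambda>j. W j - W' j"] this[of "\<lambda>j. W' j - W j"] ne show ?thesis
    unfolding fdist_def tuple_dist_def by (simp add: nonempty_has_size) linarith
qed

lemma inj_on_merge: "inj_on merge (factor_tuples a)"
proof (rule inj_onI)
  fix W W' assume W: "W \<in> factor_tuples a" "W' \<in> factor_tuples a" and eq: "merge W = merge W'"
  then have "tuple_dist W W' = 0" using fdist_merge[OF W] fdist_eq_0_iff[of "merge W'"] by metis
  then show "W = W'"
    using fdist_le_tuple_dist[of _ W W'] by (auto simp: fdist_eq_0_iff intro: factor_tuples_eqI[OF W])
qed

lemma is_chain_merge_fun_upd:
  assumes a: "a \<in> carrier G" and W: "W \<in> factor_tuples a" and i: "i < n"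
    and ch: "is_chain (Zs (H i) (a i)) N y y'"
  shows "is_chain (Zs G a) N (merge (W(i := y))) (merge (W(i := y')))"
proof (rule is_chain_map[OF ch])
  fix x assume "x \<in> Zs (H i) (a i)"
  then show "merge (W(i := x)) \<in> Zs G a"
    by (rule Zs_G_supset[OF a fun_upd_in_factor_tuples[OF W i]])
next
  fix x x' assume x: "x \<in> Zs (H i) (a i)" "x' \<in> Zs (H i) (a i)" "fdist x x' \<le> N"
  have "tuple_dist (W(i := x)) (W(i := x')) = fdist x x'"
    by (subst tuple_dist_eq_fdist[OF i]) auto
  then show "fdist (merge (W(i := x))) (merge (W(i := x'))) \<le> N"
    using fdist_merge[OF fun_upd_in_factor_tuples[OF W i x(1)] fun_upd_in_factor_tuples[OF W i x(2)]] x(3)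
    by simp
qed

text \<open>Change the coordinates one at a time, following a chain in each.\<close>

lemma is_chain_merge:
  assumes a: "a \<in> carrier G" and W: "W \<in> factor_tuples a" "W' \<in> factor_tuples a"
    and ch: "\<And>k. k < n \<Longrightarrow> is_chain (Zs (H k) (a k)) N (W k) (W' k)"
  shows "is_chain (Zs G a) N (merge W) (merge W')"
proof -
  define V where "V m = (\<lambda>l. if l < m then W' l else W l)" for m
  have "m \<le> n \<Longrightarrow> V m \<in> factor_tuples a \<and> is_chain (Zs G a) N (merge W) (merge (V m))" for m
  proof (induction m)
    case 0
    have "V 0 = W" by (simp add: V_def)
    then show ?case using W(1) is_chain_refl[OF Zs_G_supset[OF a W(1)]] by simp
  next
    case (Suc m)
    then have V: "V m \<in> factor_tuples a" and IH: "is_chain (Zs G a) N (merge W) (merge (V m))"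
      by auto
    have "(V m)(m := W m) = V m" "(V m)(m := W' m) = V (Suc m)"
      by (auto simp: V_def)
    moreover have "is_chain (Zs G a) N (merge ((V m)(m := W m))) (merge ((V m)(m := W' m)))"
      using Suc.prems ch by (intro is_chain_merge_fun_upd[OF a V]) auto
    moreover have "(V m)(m := W' m) \<in> factor_tuples a"
      using Suc.prems by (intro fun_upd_in_factor_tuples[OF V] factor_tuples_apply[OF W(2)]) auto
    ultimately show ?case using is_chain_trans[OF IH] by auto
  qed
  then have "V n \<in> factor_tuples a" "is_chain (Zs G a) N (merge W) (merge (V n))"
    by auto
  moreover have "V n = W'"
    by (rule factor_tuples_eqI[OF \<open>V n \<in> factor_tuples a\<close> W(2)]) (simp add: V_def)
  ultimately show ?thesis by simp
qed

definition component :: "(nat \<Rightarrow> 'a) \<Rightarrow> nat \<Rightarrow> (nat \<Rightarrow> 'a) set multiset \<Rightarrow> 'a set multiset" where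
  "component a i z = inv_into (factor_tuples a) merge z i"

lemma component_merge: "W \<in> factor_tuples a \<Longrightarrow> component a i (merge W) = W i"
  by (simp add: component_def inv_into_f_f[OF inj_on_merge])

lemma is_chain_component:
  assumes a: "a \<in> carrier G" and i: "i < n" and ch: "is_chain (Zs G a) N z z'"
  shows "is_chain (Zs (H i) (a i)) N (component a i z) (component a i z')"
proof (rule is_chain_map[OF ch])
  fix x assume "x \<in> Zs G a"
  then show "component a i x \<in> Zs (H i) (a i)"
    using Zs_G_eq[OF a] component_merge factor_tuples_apply[OF _ i] by auto
next
  fix x x' assume x: "x \<in> Zs G a" "x' \<in> Zs G a" "fdist x x' \<le> N"
  then obtain W W' where W: "W \<in> factor_tuples a" "x = merge W" "W' \<in> factor_tuples a" "x' = merge W'"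
    using Zs_G_eq[OF a] by auto
  then show "fdist (component a i x) (component a i x') \<le> N"
    using fdist_merge[OF W(1,3)] fdist_le_tuple_dist[OF i, of W W'] x(3) by (simp add: component_merge)
qed

lemma chain_connected_G_iff:
  assumes a: "a \<in> carrier G" and ne: "Zs G a \<noteq> {}"
  shows "chain_connected (Zs G a) N \<longleftrightarrow> (\<forall>k<n. chain_connected (Zs (H k) (a k)) N)"
proof safe
  fix k assume conn: "chain_connected (Zs G a) N" and k: "k < n"
  obtain W where W: "W \<in> factor_tuples a" using ne Zs_G_eq[OF a] by auto
  show "chain_connected (Zs (H k) (a k)) N"
    unfolding chain_connected_def
  proof (intro ballI)
    fix y y' assume y: "y \<in> Zs (H k) (a k)" "y' \<in> Zs (H k) (a k)"
    have upd: "W(k := y) \<in> factor_tuples a" "W(k := y') \<in> factor_tuples a"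
      using fun_upd_in_factor_tuples[OF W k] y by auto
    then have "is_chain (Zs G a) N (merge (W(k := y))) (merge (W(k := y')))"
      using conn Zs_G_supset[OF a] unfolding chain_connected_def by blast
    then have "is_chain (Zs (H k) (a k)) N (component a k (merge (W(k := y)))) (component a k (merge (W(k := y'))))"
      by (rule is_chain_component[OF a k])
    then show "is_chain (Zs (H k) (a k)) N y y'"
      by (simp add: component_merge[OF upd(1)] component_merge[OF upd(2)])
  qed
next
  assume "\<forall>k<n. chain_connected (Zs (H k) (a k)) N"
  then have "is_chain (Zs G a) N (merge W) (merge W')" if "W \<in> factor_tuples a" "W' \<in> factor_tuples a" for W W'
    by (intro is_chain_merge[OF a that])
      (use factor_tuples_apply[OF that(1)] factor_tuples_apply[OF that(2)] in \<open>auto simp: chain_connected_def\<close>)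
  then show "chain_connected (Zs G a) N"
    unfolding chain_connected_def by (auto simp: Zs_G_eq[OF a])
qed

section \<open>Comparing the invariants\<close>

lemma merge_concentrated:
  "i < n \<Longrightarrow> (\<And>k. k < n \<Longrightarrow> k \<noteq> i \<Longrightarrow> W k = {#}) \<Longrightarrow> merge W = image_mset (lift_class i) (W i)"
  unfolding merge_def by (simp add: sum.remove[of "{..<n}" i])

lemma fdist_image_lift_class:
  assumes i: "i < n" and t: "t \<in> Zs (H i) x" "t' \<in> Zs (H i) x"
  shows "fdist (image_mset (lift_class i) t) (image_mset (lift_class i) t') = fdist t t'"
proof -
  have "inj_on (lift_class i) (set_mset t \<union> set_mset t')"
    using Zs_subset_atom_classes[OF t(1)] Zs_subset_atom_classes[OF t(2)] atom_classes_subset_Pow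
    by (intro inj_on_subset[OF inj_on_lift_class[OF i]]) blast
  then show ?thesis
    unfolding fdist_def by (simp add: image_mset_diff_if_inj_on[symmetric] Un_commute)
qed

lemma inj_on_image_mset_lift_class: "i < n \<Longrightarrow> inj_on (image_mset (lift_class i)) (Zs (H i) x)"
proof (rule inj_onI)
  fix t t' assume i: "i < n" and t: "t \<in> Zs (H i) x" "t' \<in> Zs (H i) x"
    and eq: "image_mset (lift_class i) t = image_mset (lift_class i) t'"
  then have "fdist t t' = 0"
    using fdist_image_lift_class[OF i t] fdist_eq_0_iff by metis
  then show "t = t'" by (simp add: fdist_eq_0_iff)
qed

lemma Zs_G_concentrated_eq:
  assumes w: "w \<in> carrier G" and i: "i < n" and u: "\<And>k. k < n \<Longrightarrow> k \<noteq> i \<Longrightarrow> w k \<in> Units (H k)"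
  shows "Zs G w = image_mset (lift_class i) ` Zs (H i) (w i)"
proof (unfold Zs_G_eq[OF w], intro equalityI subsetI)
  have units: "Zs (H k) (w k) = {{#}}" if "k < n" "k \<noteq> i" for k
    using comm_monoid_cancel.Zs_Units[OF comm_monoid_cancel_factor u] that by blast
  fix z
  {
    assume "z \<in> merge ` factor_tuples w"
    then obtain W where W: "W \<in> factor_tuples w" "z = merge W" by blast
    have "W k = {#}" if "k < n" "k \<noteq> i" for k
      using factor_tuples_apply[OF W(1) that(1)] units[OF that] by simp
    then have "z = image_mset (lift_class i) (W i)"
      using merge_concentrated[OF i] W(2) by simp
    then show "z \<in> image_mset (lift_class i) ` Zs (H i) (w i)"
      using factor_tuples_apply[OF W(1) i] by blast
  next
    assume "z \<in> image_mset (lift_class i) ` Zs (H i) (w i)"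
    then obtain t where t: "t \<in> Zs (H i) (w i)" "z = image_mset (lift_class i) t" by blast
    define W where "W = (\<lambda>k\<in>{..<n}. if k = i then t else {#})"
    have "W \<in> factor_tuples w"
      using t(1) units by (auto simp: W_def factor_tuples_def)
    moreover have "merge W = z"
      using merge_concentrated[OF i, of W] i t(2) by (simp add: W_def)
    ultimately show "z \<in> merge ` factor_tuples w" by blast
  }
qed

lemma Zs_G_concentrated:
  assumes "w \<in> carrier G" "i < n" "\<And>k. k < n \<Longrightarrow> k \<noteq> i \<Longrightarrow> w k \<in> Units (H k)"
  shows "bij_betw (image_mset (lift_class i)) (Zs (H i) (w i)) (Zs G w)"
  using Zs_G_concentrated_eq[OF assms] inj_on_image_mset_lift_class[OF assms(2)]
  by (simp add: bij_betw_def)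

lemma Ls_G_concentrated:
  assumes "w \<in> carrier G" "i < n" "\<And>k. k < n \<Longrightarrow> k \<noteq> i \<Longrightarrow> w k \<in> Units (H k)"
  shows "Ls G w = Ls (H i) (w i)"
  by (simp add: Ls_def Zs_G_concentrated_eq[OF assms] image_image)

lemma catenary_degree_G_concentrated:
  assumes "w \<in> carrier G" "i < n" "\<And>k. k < n \<Longrightarrow> k \<noteq> i \<Longrightarrow> w k \<in> Units (H k)"
  shows "catenary_degree G w = catenary_degree (H i) (w i)"
proof -
  have "chain_connected (Zs G w) = chain_connected (Zs (H i) (w i))"
    using chain_connected_isometry_iff[OF Zs_G_concentrated[OF assms]
        fdist_image_lift_class[OF assms(2), where x = "w i"]] by blast
  then show ?thesis by (simp add: catenary_degree_eq_Least)
qed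

lemma Rset_factor_subset:
  assumes i: "i < n" shows "Rset (H i) \<subseteq> Rset G"
proof
  fix d assume "d \<in> Rset (H i)"
  then obtain x y y' where d: "2 \<le> d" and x: "x \<in> carrier (H i)"
    and y: "y \<in> Zs (H i) x" "y' \<in> Zs (H i) x" "y \<noteq> y'" "fdist y y' = d"
      "\<not> is_chain (Zs (H i) x) (d - 1) y y'"
    unfolding Rset_def by blast
  let ?f = "image_mset (lift_class i)"
  have w: "single i x \<in> carrier G" "single i x i = x"
    using single_in_carrier[OF i x] by simp_all
  note bij = Zs_G_concentrated[OF w(1) i single_apply_Units, unfolded w(2)]
  note iso = fdist_image_lift_class[OF i]
  have m: "?f y \<in> Zs G (single i x)" "?f y' \<in> Zs G (single i x)"
    using bij y(1,2) by (auto simp: bij_betw_def)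
  have "?f y \<noteq> ?f y'"
    using bij y(1-3) by (auto simp: bij_betw_def inj_on_eq_iff)
  moreover have "fdist (?f y) (?f y') = d" "\<not> is_chain (Zs G (single i x)) (d - 1) (?f y) (?f y')"
    using y iso[OF y(1,2)] is_chain_isometry_iff[OF bij iso y(1,2)] by auto
  ultimately show "d \<in> Rset G"
    unfolding Rset_def using d by (intro CollectI conjI bexI[OF _ w(1)] bexI[OF _ m(1)] bexI[OF _ m(2)])
qed

lemma Ca_factor_subset:
  assumes i: "i < n" shows "Ca (H i) \<subseteq> Ca G"
proof
  fix c assume "c \<in> Ca (H i)"
  then obtain x y y' where x: "x \<in> carrier (H i)" and y: "y \<in> Zs (H i) x" "y' \<in> Zs (H i) x" "y \<noteq> y'"
    and c: "c = catenary_degree (H i) x"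
    unfolding Ca_def by blast
  have w: "single i x \<in> carrier G" "single i x i = x"
    using single_in_carrier[OF i x] by simp_all
  note bij = Zs_G_concentrated[OF w(1) i single_apply_Units, unfolded w(2)]
  have "image_mset (lift_class i) y \<noteq> image_mset (lift_class i) y'"
    using bij y by (auto simp: bij_betw_def inj_on_eq_iff)
  moreover have "c = catenary_degree G (single i x)"
    using catenary_degree_G_concentrated[OF w(1) i single_apply_Units] w(2) c by simp
  ultimately show "c \<in> Ca G"
    using bij y(1,2) w(1) unfolding Ca_def bij_betw_def by blast
qed

lemma daleth_star_factor_subset:
  assumes i: "i < n" shows "daleth_star (H i) \<subseteq> daleth_star G"
proof
  fix d assume "d \<in> daleth_star (H i)"
  then obtain x y where xy: "x \<in> atoms (H i)" "y \<in> atoms (H i)"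
    and card: "card (Ls (H i) (x \<otimes>\<^bsub>H i\<^esub> y)) > 1" and d: "d = Min (Ls (H i) (x \<otimes>\<^bsub>H i\<^esub> y) - {2})"
    unfolding daleth_star_def by blast
  have x: "x \<in> carrier (H i)" "irreducible (H i) x" and y: "y \<in> carrier (H i)" "irreducible (H i) y"
    using xy by (auto simp: atoms_def)
  have xy_closed: "x \<otimes>\<^bsub>H i\<^esub> y \<in> carrier (H i)" using monoid.m_closed[OF monoid_factor[OF i] x(1) y(1)] .
  have "single i x \<in> atoms G" "single i y \<in> atoms G"
    using single_in_carrier[OF i] irreducible_single[OF i] x y by (auto simp: atoms_def)
  moreover have "Ls G (single i x \<otimes>\<^bsub>G\<^esub> single i y) = Ls (H i) (x \<otimes>\<^bsub>H i\<^esub> y)"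
    using Ls_G_concentrated[OF single_in_carrier[OF i xy_closed] i single_apply_Units]
    by (simp add: single_mult[OF i x(1) y(1)])
  ultimately show "d \<in> daleth_star G"
    using card d unfolding daleth_star_def by (intro CollectI exI[of _ "single i x"] exI[of _ "single i y"]) simp
qed

text \<open>Distinct factorizations of one element are incomparable, so every differing coordinate
  contributes to both sums in \<open>tuple_dist\<close>.\<close>

lemma is_chain_merge_if_two_coordinates_differ:
  assumes a: "a \<in> carrier G" and W: "W \<in> factor_tuples a" "W' \<in> factor_tuples a"
    and ij: "i < n" "j < n" "i \<noteq> j" and ne: "W i \<noteq> W' i" "W j \<noteq> W' j"
  shows "is_chain (Zs G a) (tuple_dist W W' - 1) (merge W) (merge W')"
proof (rule is_chain_merge[OF a W])
  have incomparable: "W l - W' l \<noteq> {#}" "W' l - W l \<noteq> {#}" if "l < n" "W l \<noteq> W' l" for l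
    using comm_monoid_cancel.Zs_subseteq_mset_imp_eq[OF comm_monoid_cancel_factor carrier_apply[OF a]]
      factor_tuples_apply[OF W(1)] factor_tuples_apply[OF W(2)] that
    by (metis Diff_eq_empty_iff_mset)+
  fix k assume k: "k < n"
  show "is_chain (Zs (H k) (a k)) (tuple_dist W W' - 1) (W k) (W' k)"
  proof (cases "W k = W' k")
    case True
    then show ?thesis using is_chain_refl[OF factor_tuples_apply[OF W(2) k]] by simp
  next
    case False
    obtain l where l: "l < n" "l \<noteq> k" "W l \<noteq> W' l" using ij ne by blast
    have "fdist (W k) (W' k) < tuple_dist W W'"
      by (rule fdist_less_tuple_dist[of k l W W', OF k l(1,2) incomparable[OF l(1,3)]])
    then show ?thesis
      by (intro is_chain_step factor_tuples_apply[OF W(1) k] factor_tuples_apply[OF W(2) k]) simp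
  qed
qed

lemma Rset_G_subset: "Rset G \<subseteq> (\<Union>i<n. Rset (H i))"
proof
  fix d assume "d \<in> Rset G"
  then obtain a z z' where d: "2 \<le> d" and a: "a \<in> carrier G" and z: "z \<in> Zs G a" "z' \<in> Zs G a"
    "z \<noteq> z'" "fdist z z' = d" "\<not> is_chain (Zs G a) (d - 1) z z'"
    unfolding Rset_def by blast
  obtain W W' where W: "W \<in> factor_tuples a" "W' \<in> factor_tuples a" "z = merge W" "z' = merge W'"
    using z(1,2) Zs_G_eq[OF a] by auto
  have dist: "tuple_dist W W' = d" using z(4) fdist_merge[OF W(1,2)] W(3,4) by simp
  obtain i where i: "i < n" "W i \<noteq> W' i" using z(3) W factor_tuples_eqI by blast
  have others: "W k = W' k" if "k < n" "k \<noteq> i" for k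
    using is_chain_merge_if_two_coordinates_differ[OF a W(1,2) i(1) that(1) that(2)[symmetric] i(2)]
      z(5) W(3,4) dist by auto
  have "fdist (W i) (W' i) = d" using tuple_dist_eq_fdist[OF i(1) others] dist by simp
  moreover have "\<not> is_chain (Zs (H i) (a i)) (d - 1) (W i) (W' i)"
  proof
    assume ch: "is_chain (Zs (H i) (a i)) (d - 1) (W i) (W' i)"
    have "is_chain (Zs G a) (d - 1) (merge W) (merge W')"
    proof (rule is_chain_merge[OF a W(1,2)])
      fix k assume k: "k < n"
      show "is_chain (Zs (H k) (a k)) (d - 1) (W k) (W' k)"
        using ch others[OF k] is_chain_refl[OF factor_tuples_apply[OF W(2) k]] by (cases "k = i") auto
    qed
    then show False using z(5) W(3,4) by simp
  qed
  ultimately have "d \<in> Rset (H i)"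
    unfolding Rset_def using d carrier_apply[OF a i(1)] factor_tuples_apply[OF W(1) i(1)]
      factor_tuples_apply[OF W(2) i(1)] i(2) by blast
  then show "d \<in> (\<Union>i<n. Rset (H i))" using i(1) by blast
qed

definition ambiguous_coordinates :: "(nat \<Rightarrow> 'a) \<Rightarrow> nat set" where
  "ambiguous_coordinates a = {k. k < n \<and> (\<exists>y\<in>Zs (H k) (a k). \<exists>y'\<in>Zs (H k) (a k). y \<noteq> y')}"

lemma ambiguous_coordinates_nonempty:
  assumes a: "a \<in> carrier G" and z: "z \<in> Zs G a" "z' \<in> Zs G a" "z \<noteq> z'"
  shows "ambiguous_coordinates a \<noteq> {}"
proof -
  obtain W W' where W: "W \<in> factor_tuples a" "W' \<in> factor_tuples a" "W \<noteq> W'"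
    using z Zs_G_eq[OF a] by auto
  then obtain k where "k < n" "W k \<noteq> W' k" using factor_tuples_eqI by blast
  then have "k \<in> ambiguous_coordinates a"
    unfolding ambiguous_coordinates_def using factor_tuples_apply[OF W(1)] factor_tuples_apply[OF W(2)] by blast
  then show ?thesis by blast
qed

lemma catenary_degree_G_eq_Max:
  assumes BF: "\<And>i. i < n \<Longrightarrow> BF_monoid (H i)" and a: "a \<in> carrier G" and ne: "Zs G a \<noteq> {}"
    and K: "ambiguous_coordinates a \<noteq> {}"
  shows "catenary_degree G a = Max ((\<lambda>k. catenary_degree (H k) (a k)) ` ambiguous_coordinates a)"
proof -
  let ?K = "ambiguous_coordinates a"
  have trivial: "chain_connected (Zs (H k) (a k)) N" if "k < n" "k \<notin> ?K" for k N
    using that by (intro chain_connected_subsingleton) (auto simp: ambiguous_coordinates_def)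
  have "chain_connected (Zs G a) N \<longleftrightarrow> (\<forall>k<n. chain_connected (Zs (H k) (a k)) N)" for N
    by (rule chain_connected_G_iff[OF a ne])
  also have "\<dots> N \<longleftrightarrow> (\<forall>k\<in>?K. chain_connected (Zs (H k) (a k)) N)" for N
    using trivial by (metis (no_types, lifting) ambiguous_coordinates_def mem_Collect_eq)
  finally have "catenary_degree G a = (LEAST N. \<forall>k\<in>?K. chain_connected (Zs (H k) (a k)) N)"
    by (simp add: catenary_degree_eq_Least)
  also have "\<dots> = Max ((\<lambda>k. catenary_degree (H k) (a k)) ` ?K)"
    unfolding catenary_degree_eq_Least
  proof (rule Least_Ball_eq_Max_Least)
    fix k assume "k \<in> ?K"
    then have "finite (Ls (H k) (a k))"
      using BF carrier_apply[OF a] by (auto simp: ambiguous_coordinates_def BF_monoid_def)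
    then show "\<exists>N. chain_connected (Zs (H k) (a k)) N"
      using chain_connected_Max_Ls[of "H k" "a k"] by blast
  next
    fix k N M assume "N \<le> M" "chain_connected (Zs (H k) (a k)) N"
    then show "chain_connected (Zs (H k) (a k)) M" by (rule chain_connected_mono)
  next
    show "finite ?K" by (simp add: ambiguous_coordinates_def)
  qed (rule K)
  finally show ?thesis .
qed

lemma Ca_G_subset:
  assumes BF: "\<And>i. i < n \<Longrightarrow> BF_monoid (H i)"
  shows "Ca G \<subseteq> (\<Union>i<n. Ca (H i))"
proof
  fix c assume "c \<in> Ca G"
  then obtain a z z' where a: "a \<in> carrier G" and z: "z \<in> Zs G a" "z' \<in> Zs G a" "z \<noteq> z'"
    and c: "c = catenary_degree G a"
    unfolding Ca_def by blast
  note K = ambiguous_coordinates_nonempty[OF a z]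
  have ne: "Zs G a \<noteq> {}" using z(1) by blast
  have "c = Max ((\<lambda>k. catenary_degree (H k) (a k)) ` ambiguous_coordinates a)"
    using c catenary_degree_G_eq_Max[OF BF a ne K] by simp
  also have "\<dots> \<in> (\<lambda>k. catenary_degree (H k) (a k)) ` ambiguous_coordinates a"
    using K by (intro Max_in) (simp_all add: ambiguous_coordinates_def)
  finally have "c \<in> (\<lambda>k. catenary_degree (H k) (a k)) ` ambiguous_coordinates a" .
  then obtain k where k: "k < n" "\<exists>y\<in>Zs (H k) (a k). \<exists>y'\<in>Zs (H k) (a k). y \<noteq> y'"
    and "c = catenary_degree (H k) (a k)"
    by (auto simp: ambiguous_coordinates_def)
  then have "c \<in> Ca (H k)"
    unfolding Ca_def using carrier_apply[OF a k(1)] by blast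
  then show "c \<in> (\<Union>i<n. Ca (H i))" using k(1) by blast
qed

lemma Ls_G_eq: "a \<in> carrier G \<Longrightarrow> Ls G a = (\<lambda>W. \<Sum>k<n. size (W k)) ` factor_tuples a"
  by (simp add: Ls_def Zs_G_eq image_image size_merge)

lemma Ls_mult_atoms_distinct_coordinates:
  assumes u: "u \<in> carrier G" "i < n" "irreducible (H i) (u i)" "\<And>k. k < n \<Longrightarrow> k \<noteq> i \<Longrightarrow> u k \<in> Units (H k)"
    and v: "v \<in> carrier G" "j < n" "irreducible (H j) (v j)" "\<And>k. k < n \<Longrightarrow> k \<noteq> j \<Longrightarrow> v k \<in> Units (H k)"
    and ij: "i \<noteq> j"
  shows "Ls G (u \<otimes>\<^bsub>G\<^esub> v) \<subseteq> {2}"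
proof -
  let ?w = "u \<otimes>\<^bsub>G\<^esub> v"
  have w: "?w \<in> carrier G" "\<And>k. k < n \<Longrightarrow> ?w k = u k \<otimes>\<^bsub>H k\<^esub> v k"
    using u(1) v(1) by (simp_all add: mult_apply)
  have size: "size (W k) = (if k = i then 1 else 0) + (if k = j then 1 else 0)" if W: "W \<in> factor_tuples ?w" and k: "k < n" for W k
  proof -
    interpret Hk: comm_monoid_cancel "H k" by (rule comm_monoid_cancel_factor[OF k])
    have uv: "u k \<in> carrier (H k)" "v k \<in> carrier (H k)" using carrier_apply u(1) v(1) k by auto
    consider "k = i" | "k = j" | "k \<noteq> i" "k \<noteq> j" by blast
    then show ?thesis
    proof cases
      case 1
      then have "irreducible (H k) (?w k)"
        using Hk.irreducible_prod_rI u(3) v(4)[OF k] ij uv w(2)[OF k] by simp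
      then show ?thesis using Hk.size_Zs_irreducible factor_tuples_apply[OF W k] w(1) carrier_apply 1 k ij by auto
    next
      case 2
      then have "irreducible (H k) (?w k)"
        using Hk.irreducible_prod_lI v(3) u(4)[OF k] ij uv w(2)[OF k] by simp
      then show ?thesis using Hk.size_Zs_irreducible factor_tuples_apply[OF W k] w(1) carrier_apply 2 k ij by auto
    next
      case 3
      then have "?w k \<in> Units (H k)" using u(4) v(4) k uv w(2)[OF k] by simp
      then show ?thesis using Hk.Zs_Units factor_tuples_apply[OF W k] 3 by auto
    qed
  qed
  have "(\<Sum>k<n. size (W k)) = 2" if "W \<in> factor_tuples ?w" for W
    using size[OF that] u(2) v(2) by (simp add: sum.distrib)
  then show ?thesis using Ls_G_eq[OF w(1)] by auto
qed

lemma daleth_star_G_subset: "daleth_star G \<subseteq> (\<Union>i<n. daleth_star (H i))"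
proof
  fix d assume "d \<in> daleth_star G"
  then obtain u v where uv: "u \<in> atoms G" "v \<in> atoms G"
    and card: "card (Ls G (u \<otimes>\<^bsub>G\<^esub> v)) > 1" and d: "d = Min (Ls G (u \<otimes>\<^bsub>G\<^esub> v) - {2})"
    unfolding daleth_star_def by blast
  have u: "u \<in> carrier G" "irreducible G u" and v: "v \<in> carrier G" "irreducible G v"
    using uv by (auto simp: atoms_def)
  obtain i where i: "i < n" "irreducible (H i) (u i)" "\<And>k. k < n \<Longrightarrow> k \<noteq> i \<Longrightarrow> u k \<in> Units (H k)"
    using irreducible_G_E[OF u] by blast
  obtain j where j: "j < n" "irreducible (H j) (v j)" "\<And>k. k < n \<Longrightarrow> k \<noteq> j \<Longrightarrow> v k \<in> Units (H k)"
    using irreducible_G_E[OF v] by blast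
  have "i = j"
  proof (rule ccontr)
    assume "i \<noteq> j"
    then have "Ls G (u \<otimes>\<^bsub>G\<^esub> v) \<subseteq> {2}"
      using Ls_mult_atoms_distinct_coordinates[OF u(1) i v(1) j] by blast
    then have "card (Ls G (u \<otimes>\<^bsub>G\<^esub> v)) \<le> card {2::nat}"
      by (rule card_mono[rotated]) simp
    then show False using card by simp
  qed
  have "(u \<otimes>\<^bsub>G\<^esub> v) k \<in> Units (H k)" if "k < n" "k \<noteq> i" for k
    using i(3) j(3) \<open>i = j\<close> that carrier_apply u(1) v(1) monoid.Units_m_closed[OF monoid_factor] by (simp add: mult_apply)
  then have "Ls G (u \<otimes>\<^bsub>G\<^esub> v) = Ls (H i) (u i \<otimes>\<^bsub>H i\<^esub> v i)"
    using Ls_G_concentrated[OF G.m_closed[OF u(1) v(1)] i(1)] i(1) by (simp add: mult_apply)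
  moreover have "u i \<in> atoms (H i)" "v i \<in> atoms (H i)"
    using i(2) j(2) \<open>i = j\<close> carrier_apply[OF u(1) i(1)] carrier_apply[OF v(1) i(1)] by (auto simp: atoms_def)
  ultimately have "d \<in> daleth_star (H i)"
    using card d unfolding daleth_star_def by (intro CollectI exI[of _ "u i"] exI[of _ "v i"]) simp
  then show "d \<in> (\<Union>i<n. daleth_star (H i))" using i(1) by blast
qed

end

theorem lemma3p1:
  fixes n :: nat and H :: "nat \<Rightarrow> ('a, 'b) monoid_scheme"
  assumes "\<And>i. i < n \<Longrightarrow> BF_monoid (H i)"
  shows "Rset (prodM n H) = (\<Union>i<n. Rset (H i)) \<and>
         Ca (prodM n H) = (\<Union>i<n. Ca (H i)) \<and>
         daleth_star (prodM n H) = (\<Union>i<n. daleth_star (H i))"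
proof -
  interpret monoid_product n H
    by (rule monoid_product.intro) (use assms in \<open>simp add: BF_monoid_def\<close>)
  show ?thesis
    using Rset_G_subset Rset_factor_subset Ca_G_subset[OF assms] Ca_factor_subset
      daleth_star_G_subset daleth_star_factor_subset
    by (intro conjI equalityI) blast+
qed

end
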